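(* Under the standing assumptions below, $W$ is a Foster–Lyapunov function: for every $\eta\in\Theta$, $$LW(\eta)\le\mathbf b\langle h\rangle-\tfrac12W(\eta),$$ where $\langle h\rangle=\int_{\mathbb R^d}h(x)dx$.
   Context: Fix $d\in\mathbb N$, $\varepsilon>0$, $G(x)=(1+|x|)^{-d-\varepsilon}$. $\Gamma$ is the set of locally finite subsets of $\mathbb R^d$; $\Gamma_G=\{\gamma\in\Gamma:\sum_{x\in\gamma}G(x)<\infty\}$. Let $b:\mathbb R^d\times\Gamma_G\to[0,\infty)$ be measurable with $\mathbf b:=\sup_{x,\eta}b(x,\eta)<\infty$. The operator $L$ acts on functions $F$ on configurations by $$LF(\eta)=\sum_{x\in\eta}\bigl(F(\eta\setminus\{x\})-F(\eta)\bigr)+\int_{\mathbb R^d}b(x,\eta)\bigl(F(\eta\cup\{x\})-F(\eta)\bigr)dx.$$ Let $K:(0,\infty)\to(0,\infty)$ be non-increasing with $\lim_{q\to0+}K(q)=\infty$ and $\int_r^\infty K(q)q^{d-1}dq<\infty$ for every $r>0$. Let $\phi,h:\mathbb R^d\to(0,\infty)$ be measurable, separated from $0$ on every compact set, with $C_1:=\sup_{x}\int_{\mathbb R^d}\phi(y)K(|x-y|)dy<\infty$ and $2C_1\mathbf b\,\phi(x)\le h(x)\le G(x)$ for all $x$. Set $\psi(x,y)=\phi(x)\phi(y)K(|x-y|)$ ($x\ne y$), $V(\eta)=\sum_{\{x,y\}\subset\eta}\psi(x,y)$ (sum over unordered pairs of distinct points), $\langle h,\eta\rangle=\sum_{x\in\eta}h(x)$,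 $W(\eta)=\langle h,\eta\rangle+V(\eta)\in[0,\infty]$, and $\Theta=\{\eta\in\Gamma_G:V(\eta)<\infty\}$. *)

theory Defs
  imports "HOL-Analysis.Analysis"
begin

text \<open>Configurations in R^d are sets of points of a Euclidean space 'a (d = DIM('a)).\<close>

definition locfin :: "'a::euclidean_space set \<Rightarrow> bool" where
  "locfin \<eta> \<longleftrightarrow> (\<forall>B. bounded B \<longrightarrow> finite (\<eta> \<inter> B))"

definition Gfun :: "real \<Rightarrow> 'a::euclidean_space \<Rightarrow> real" where
  "Gfun \<epsilon> x = (1 + norm x) powr (- (real DIM('a) + \<epsilon>))"

definition GammaG :: "real \<Rightarrow> 'a::euclidean_space set set" where
  "GammaG \<epsilon> = {\<eta>. locfin \<eta> \<and> Gfun \<epsilon> summable_on \<eta>}"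

definition offdiag :: "'a set \<Rightarrow> ('a \<times> 'a) set" where
  "offdiag \<eta> = {(x, y). x \<in> \<eta> \<and> y \<in> \<eta> \<and> x \<noteq> y}"

definition psi :: "('a::euclidean_space \<Rightarrow> real) \<Rightarrow> (real \<Rightarrow> real) \<Rightarrow> 'a \<Rightarrow> 'a \<Rightarrow> real" where
  "psi \<phi> K x y = \<phi> x * \<phi> y * K (dist x y)"

text \<open>Sum over unordered pairs of distinct points = half the sum over ordered pairs (psi symmetric).\<close>
definition Vfun :: "('a::euclidean_space \<Rightarrow> real) \<Rightarrow> (real \<Rightarrow> real) \<Rightarrow> 'a set \<Rightarrow> real" where
  "Vfun \<phi> K \<eta> = (1/2) * (\<Sum>\<^sub>\<infinity>(x, y)\<in>offdiag \<eta>. psi \<phi> K x y)"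

definition Wfun :: "('a::euclidean_space \<Rightarrow> real) \<Rightarrow> ('a \<Rightarrow> real) \<Rightarrow> (real \<Rightarrow> real) \<Rightarrow> 'a set \<Rightarrow> real" where
  "Wfun h \<phi> K \<eta> = (\<Sum>\<^sub>\<infinity>x\<in>\<eta>. h x) + Vfun \<phi> K \<eta>"

definition Theta :: "real \<Rightarrow> ('a::euclidean_space \<Rightarrow> real) \<Rightarrow> (real \<Rightarrow> real) \<Rightarrow> 'a set set" where
  "Theta \<epsilon> \<phi> K = {\<eta> \<in> GammaG \<epsilon>. (\<lambda>(x, y). psi \<phi> K x y) summable_on offdiag \<eta>}"

definition Lgen :: "('a::euclidean_space \<Rightarrow> 'a set \<Rightarrow> real) \<Rightarrow> ('a set \<Rightarrow> real) \<Rightarrow> 'a set \<Rightarrow> real" where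
  "Lgen b F \<eta> = (\<Sum>\<^sub>\<infinity>x\<in>\<eta>. F (\<eta> - {x}) - F \<eta>)
      + (\<integral>x. b x \<eta> * (F (insert x \<eta>) - F \<eta>) \<partial>lborel)"

definition bsup :: "('a::euclidean_space \<Rightarrow> 'a set \<Rightarrow> real) \<Rightarrow> real \<Rightarrow> real" where
  "bsup b \<epsilon> = Sup {b x \<eta> | x \<eta>. \<eta> \<in> GammaG \<epsilon>}"

definition C1 :: "('a::euclidean_space \<Rightarrow> real) \<Rightarrow> (real \<Rightarrow> real) \<Rightarrow> ennreal" where
  "C1 \<phi> K = (SUP x. \<integral>\<^sup>+ y. ennreal (\<phi> y * K (dist x y)) \<partial>lborel)"

end

theory Submission
  imports Defs
begin

text \<open>
  Removing a point x from \<eta> lowers W by h x plus the interactions of x with the other points, so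
  the sum over x \<in> \<eta> in L W equals -(<h,\<eta>> + 2 V \<eta>). Adding a point x raises W by
  h x + (sum over y \<in> \<eta> of \<psi> x y); integrating against b \<le> B and exchanging sum and integral
  (Tonelli), the interaction term contributes at most B C1 (sum over y of \<phi> y) \<le> <h,\<eta>>/2 by the
  choice of h, while the h-term contributes B <h>, which is finite because h \<le> G and G is
  integrable (compare G with a step function on dyadic boxes). Together this gives
  B <h> - <h,\<eta>>/2 - 2 V \<eta> \<le> B <h> - W \<eta> / 2.

  The integral term is bounded through its positive part, which also covers a non-integrable
  integrand (Bochner integral 0).
\<close>

lemma Gfun_le_dyadic_box:
  fixes x :: "'a::euclidean_space"
  assumes "0 \<le> \<epsilon>"
  obtains k :: nat where "Gfun \<epsilon> x \<le> (2 ^ k) powr (- (real DIM('a) + \<epsilon>))"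
    and "x \<in> cbox (- (2 ^ (k + 1)) *\<^sub>R One) ((2 ^ (k + 1)) *\<^sub>R One)"
proof -
  define t where "t = 1 + norm x"
  have t1: "1 \<le> t" by (simp add: t_def)
  define k where "k = nat \<lfloor>log 2 t\<rfloor>"
  have "0 \<le> log 2 t" using t1 by simp
  then have k_le: "real k \<le> log 2 t" and k_gt: "log 2 t < real k + 1"
    by (simp_all add: k_def)
  have "(2::real) ^ k = 2 powr real k" by (simp add: powr_realpow)
  also have "\<dots> \<le> t" using k_le t1 by (simp add: le_log_iff)
  finally have "Gfun \<epsilon> x \<le> (2 ^ k) powr (- (real DIM('a) + \<epsilon>))"
    unfolding Gfun_def t_def[symmetric] using assms by (intro powr_mono2') auto
  moreover have "norm x \<le> 2 ^ (k + 1)"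
  proof -
    have "t = 2 powr log 2 t" using t1 by simp
    also have "\<dots> < 2 powr (real k + 1)" using k_gt by simp
    finally show ?thesis by (simp add: t_def powr_realpow[symmetric] powr_add)
  qed
  then have "x \<in> cbox (- (2 ^ (k + 1)) *\<^sub>R One) ((2 ^ (k + 1)) *\<^sub>R One)"
    by (force simp: mem_box abs_le_iff dest: order_trans[OF Basis_le_norm])
  ultimately show ?thesis by (rule that)
qed

lemma emeasure_dyadic_box:
  "emeasure lborel (cbox (- (2 ^ (k + 1)) *\<^sub>R One) ((2 ^ (k + 1)) *\<^sub>R One) :: 'a::euclidean_space set)
     = ennreal (4 ^ DIM('a) * (2 ^ DIM('a)) ^ k)"
proof -
  have "((2::real) ^ DIM('a)) ^ k = (2 ^ k) ^ DIM('a)"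
    by (simp add: power_mult[symmetric] mult.commute)
  then show ?thesis
    unfolding emeasure_lborel_cbox_eq
    by (auto simp: inner_diff_left algebra_simps power_mult_distrib intro!: prod.cong)
qed

lemma integrable_Gfun:
  assumes "0 < \<epsilon>"
  shows "integrable lborel (Gfun \<epsilon> :: 'a::euclidean_space \<Rightarrow> real)"
proof (rule integrableI_bounded)
  define c :: "nat \<Rightarrow> real" where "c k = (2 ^ k) powr (- (real DIM('a) + \<epsilon>))" for k
  define B :: "nat \<Rightarrow> 'a set" where "B k = cbox (- (2 ^ (k + 1)) *\<^sub>R One) ((2 ^ (k + 1)) *\<^sub>R One)" for k
  define q :: real where "q = 2 powr - \<epsilon>"
  have q: "0 \<le> q" "q < 1"
    using assms by (auto simp: q_def powr_less_one)
  show "Gfun \<epsilon> \<in> borel_measurable (lborel :: 'a measure)"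
    unfolding Gfun_def by measurable
  have Gfun_le: "ennreal (norm (Gfun \<epsilon> x)) \<le> (\<Sum>k. ennreal (c k) * indicator (B k) x)" for x
  proof -
    obtain k where "Gfun \<epsilon> x \<le> c k" "x \<in> B k"
      using Gfun_le_dyadic_box[of \<epsilon> x] assms unfolding c_def B_def by auto
    then have "ennreal (norm (Gfun \<epsilon> x)) \<le> ennreal (c k) * indicator (B k) x"
      by (simp add: Gfun_def ennreal_leI)
    also have "\<dots> \<le> (\<Sum>k. ennreal (c k) * indicator (B k) x)"
      by (rule order_trans[OF _ sum_le_suminf[OF summableI, of "{k}"]]) (auto simp del: sum_mult_indicator)
    finally show ?thesis .
  qed
  have box_weight: "ennreal (c k) * emeasure lborel (B k) = ennreal (4 ^ DIM('a) * q ^ k)" for k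
  proof -
    have "c k = (2 powr - real DIM('a)) ^ k * q ^ k"
      unfolding c_def q_def
      by (simp add: powr_realpow[symmetric] powr_powr powr_add[symmetric] powr_power algebra_simps)
    moreover have "(2 powr - real DIM('a)) ^ k * (2 ^ DIM('a)) ^ k = (1::real)"
      by (simp add: powr_minus powr_realpow power_mult_distrib[symmetric])
    ultimately have weight: "c k * (4 ^ DIM('a) * (2 ^ DIM('a)) ^ k) = 4 ^ DIM('a) * q ^ k"
      by (metis (no_types, lifting) mult.assoc mult.left_commute mult_1_right)
    have "0 \<le> c k" by (simp add: c_def)
    then show ?thesis
      by (simp only: B_def emeasure_dyadic_box ennreal_mult'[symmetric] weight)
  qed
  have "(\<integral>\<^sup>+x. ennreal (norm (Gfun \<epsilon> (x::'a))) \<partial>lborel) \<le> (\<integral>\<^sup>+x. (\<Sum>k. ennreal (c k) * indicator (B k) x) \<partial>lborel)"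
    by (rule nn_integral_mono) (rule Gfun_le)
  also have "\<dots> = (\<Sum>k. ennreal (c k) * emeasure lborel (B k))"
    by (simp add: B_def nn_integral_suminf nn_integral_cmult_indicator)
  also have "\<dots> = ennreal (\<Sum>k. 4 ^ DIM('a) * q ^ k)"
    unfolding box_weight using q by (intro suminf_ennreal2 summable_mult summable_geometric) auto
  finally show "(\<integral>\<^sup>+x. ennreal (norm (Gfun \<epsilon> (x::'a))) \<partial>lborel) < \<infinity>"
    by (simp add: order_le_less_trans)
qed

lemma countable_if_locfin:
  fixes \<eta> :: "'a::euclidean_space set"
  assumes "locfin \<eta>"
  shows "countable \<eta>"
proof -
  have "\<eta> = (\<Union>n::nat. \<eta> \<inter> cball 0 (real n))"
    by (auto intro: real_arch_simple)
  moreover have "countable (\<eta> \<inter> cball 0 (real n))" for n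
    using assms unfolding locfin_def by (intro countable_finite) auto
  ultimately show ?thesis by (metis countable_UN[of UNIV] countableI_type)
qed

lemma bsup_upper:
  assumes "bdd_above {b x \<xi> | x \<xi>. \<xi> \<in> GammaG \<epsilon>}" and "\<xi> \<in> GammaG \<epsilon>"
  shows "b x \<xi> \<le> bsup b \<epsilon>"
  unfolding bsup_def by (rule cSup_upper) (use assms in blast)+

lemma borel_measurable_antimono_dist:
  fixes y :: "'a::euclidean_space" and K :: "real \<Rightarrow> real"
  assumes K_mono: "\<And>p q. 0 < p \<Longrightarrow> p \<le> q \<Longrightarrow> K q \<le> K p"
  shows "(\<lambda>x. K (dist x y)) \<in> borel_measurable lborel"
proof -
  \<comment> \<open>K is antitone only on the positive reals and arbitrary elsewhere; K0 agrees with K on the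
    range of dist and is antitone on each of the two pieces.\<close>
  define K0 where "K0 q = (if q \<le> 0 then K 0 else K q)" for q
  have "(\<lambda>q. - K0 q) \<in> borel_measurable borel"
    by (rule borel_measurable_piecewise_mono[of "{{..0}, {0<..}}"])
       (auto simp: mono_on_def K0_def intro: K_mono)
  then have "K0 \<in> borel_measurable borel"
    by (metis borel_measurable_uminus_eq)
  then have "(\<lambda>x. K0 (dist x y)) \<in> borel_measurable lborel"
    by (intro measurable_compose[OF _ \<open>K0 \<in> _\<close>])
       (auto intro: borel_measurable_continuous_onI continuous_intros)
  moreover have "K0 (dist x y) = K (dist x y)" for x
    by (simp add: K0_def)
  ultimately show ?thesis by simp
qed

lemma summable_on_iff_integrable_count_space:
  fixes f :: "'b \<Rightarrow> real"
  shows "f summable_on A \<longleftrightarrow> integrable (count_space A) f"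
proof -
  have "f summable_on A \<longleftrightarrow> Infinite_Sum.abs_summable_on f A"
    by (rule summable_on_iff_abs_summable_on_real)
  also have "\<dots> \<longleftrightarrow> Infinite_Set_Sum.abs_summable_on f A"
    by (rule abs_summable_equivalent)
  finally show ?thesis
    by (simp only: Infinite_Set_Sum.abs_summable_on_def)
qed

lemma nn_integral_count_space_eq_infsum:
  fixes f :: "'b \<Rightarrow> real"
  assumes "\<And>x. x \<in> A \<Longrightarrow> 0 \<le> f x" and "f summable_on A"
  shows "(\<integral>\<^sup>+x. ennreal (f x) \<partial>count_space A) = ennreal (\<Sum>\<^sub>\<infinity>x\<in>A. f x)"
proof -
  have "Infinite_Set_Sum.abs_summable_on f A"
    using assms(2) by (simp add: summable_on_iff_integrable_count_space Infinite_Set_Sum.abs_summable_on_def)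
  with assms show ?thesis
    by (simp add: nn_integral_conv_infsetsum infsetsum_infsum)
qed

lemma summable_on_if_nn_integral_count_space_finite:
  fixes f :: "'b \<Rightarrow> real"
  assumes nonneg: "\<And>x. x \<in> A \<Longrightarrow> 0 \<le> f x"
    and finite: "(\<integral>\<^sup>+x. ennreal (f x) \<partial>count_space A) < \<infinity>"
  shows "f summable_on A"
proof -
  have "(\<integral>\<^sup>+x. ennreal (norm (f x)) \<partial>count_space A) = (\<integral>\<^sup>+x. ennreal (f x) \<partial>count_space A)"
    using nonneg by (intro nn_integral_cong) auto
  with finite show ?thesis
    unfolding summable_on_iff_integrable_count_space by (intro integrableI_bounded) auto
qed

lemma psi_commute: "psi \<phi> K x y = psi \<phi> K y x"
  unfolding psi_def by (simp add: dist_commute mult.commute)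

lemma psi_nonneg:
  assumes "\<And>x. 0 \<le> \<phi> x" and "\<And>q. 0 < q \<Longrightarrow> 0 \<le> K q" and "x \<noteq> y"
  shows "0 \<le> psi \<phi> K x y"
  unfolding psi_def using assms by simp

lemma borel_measurable_psi:
  fixes \<phi> :: "'a::euclidean_space \<Rightarrow> real"
  assumes "\<phi> \<in> borel_measurable lborel" and "\<And>p q. 0 < p \<Longrightarrow> p \<le> q \<Longrightarrow> K q \<le> K p"
  shows "(\<lambda>x. psi \<phi> K x y) \<in> borel_measurable lborel"
  unfolding psi_def using assms borel_measurable_antimono_dist[of K y] by measurable

lemma offdiag_eq_Sigma: "offdiag A = Sigma A (\<lambda>x. A - {x})"
  unfolding offdiag_def by auto

lemma offdiag_insert:
  assumes "x \<notin> A"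
  shows "offdiag (insert x A) = offdiag A \<union> Pair x ` A \<union> (\<lambda>y. (y, x)) ` A"
  using assms unfolding offdiag_def by auto

lemma summable_on_offdiag_insert:
  fixes A :: "'a::euclidean_space set"
  assumes "x \<notin> A" and "(\<lambda>(u, v). psi \<phi> K u v) summable_on offdiag A"
    and "(\<lambda>y. psi \<phi> K x y) summable_on A"
  shows "(\<lambda>(u, v). psi \<phi> K u v) summable_on offdiag (insert x A)"
proof -
  have "(\<lambda>(u, v). psi \<phi> K u v) summable_on Pair x ` A"
    using assms(3) by (subst summable_on_reindex) (auto simp: inj_on_def o_def)
  moreover have "(\<lambda>(u, v). psi \<phi> K u v) summable_on (\<lambda>y. (y, x)) ` A"
    using assms(3) by (subst summable_on_reindex) (auto simp: inj_on_def o_def psi_commute[of _ _ _ x])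
  ultimately show ?thesis
    unfolding offdiag_insert[OF assms(1)] using assms(2) by (intro summable_on_union)
qed

lemma Vfun_insert:
  fixes A :: "'a::euclidean_space set"
  assumes x: "x \<notin> A" and summable: "(\<lambda>(u, v). psi \<phi> K u v) summable_on offdiag (insert x A)"
  shows "Vfun \<phi> K (insert x A) = Vfun \<phi> K A + (\<Sum>\<^sub>\<infinity>y\<in>A. psi \<phi> K x y)"
proof -
  define f where "f = (\<lambda>(u, v). psi \<phi> K u v)"
  have decomp: "offdiag (insert x A) = offdiag A \<union> Pair x ` A \<union> (\<lambda>y. (y, x)) ` A"
    by (rule offdiag_insert[OF x])
  have sum_A: "f summable_on offdiag A" and sum_x: "f summable_on Pair x ` A"
    and sum_x': "f summable_on (\<lambda>y. (y, x)) ` A"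
    using summable unfolding f_def[symmetric] decomp by (auto elim: summable_on_subset_banach)
  have "infsum f (Pair x ` A) = (\<Sum>\<^sub>\<infinity>y\<in>A. psi \<phi> K x y)"
    by (subst infsum_reindex) (auto simp: inj_on_def o_def f_def)
  moreover have "infsum f ((\<lambda>y. (y, x)) ` A) = (\<Sum>\<^sub>\<infinity>y\<in>A. psi \<phi> K x y)"
    by (subst infsum_reindex) (auto simp: inj_on_def o_def f_def psi_commute[of _ _ _ x])
  moreover have "infsum f (offdiag (insert x A))
      = infsum f (offdiag A) + infsum f (Pair x ` A) + infsum f ((\<lambda>y. (y, x)) ` A)"
  proof -
    have "(offdiag A \<union> Pair x ` A) \<inter> (\<lambda>y. (y, x)) ` A = {}" and "offdiag A \<inter> Pair x ` A = {}"
      using x by (auto simp: offdiag_def)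
    then show ?thesis
      unfolding decomp
      by (simp only: infsum_Un_disjoint summable_on_union sum_A sum_x sum_x')
  qed
  ultimately show ?thesis
    unfolding Vfun_def f_def[symmetric] by linarith
qed

lemma Wfun_insert:
  fixes A :: "'a::euclidean_space set"
  assumes "x \<notin> A" and "h summable_on A"
    and "(\<lambda>(u, v). psi \<phi> K u v) summable_on offdiag (insert x A)"
  shows "Wfun h \<phi> K (insert x A) = Wfun h \<phi> K A + h x + (\<Sum>\<^sub>\<infinity>y\<in>A. psi \<phi> K x y)"
proof -
  have "(\<Sum>\<^sub>\<infinity>y\<in>insert x A. h y) = h x + (\<Sum>\<^sub>\<infinity>y\<in>A. h y)"
    using assms(1,2) by (rule infsum_insert[rotated])
  then show ?thesis
    using Vfun_insert[OF assms(1,3)] by (simp add: Wfun_def)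
qed

lemma Vfun_nonneg:
  assumes "\<And>x y. x \<noteq> y \<Longrightarrow> 0 \<le> psi \<phi> K x y"
  shows "0 \<le> Vfun \<phi> K \<eta>"
  unfolding Vfun_def using assms by (auto simp: offdiag_def intro!: infsum_nonneg)

lemma infsum_Wfun_remove_eq:
  fixes \<eta> :: "'a::euclidean_space set"
  assumes h: "h summable_on \<eta>" and psi: "(\<lambda>(u, v). psi \<phi> K u v) summable_on offdiag \<eta>"
  shows "(\<Sum>\<^sub>\<infinity>x\<in>\<eta>. Wfun h \<phi> K (\<eta> - {x}) - Wfun h \<phi> K \<eta>)
    = - ((\<Sum>\<^sub>\<infinity>x\<in>\<eta>. h x) + 2 * Vfun \<phi> K \<eta>)"
proof -
  define g where "g x = (\<Sum>\<^sub>\<infinity>y\<in>\<eta> - {x}. psi \<phi> K x y)" for x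
  have remove: "Wfun h \<phi> K (\<eta> - {x}) - Wfun h \<phi> K \<eta> = - (h x + g x)" if "x \<in> \<eta>" for x
  proof -
    have "insert x (\<eta> - {x}) = \<eta>" using that by auto
    then show ?thesis
      using Wfun_insert[of x "\<eta> - {x}" h \<phi> K] summable_on_subset_banach[OF h, of "\<eta> - {x}"] psi
      by (simp add: g_def)
  qed
  have g: "g summable_on \<eta>" and g_sum: "(\<Sum>\<^sub>\<infinity>x\<in>\<eta>. g x) = 2 * Vfun \<phi> K \<eta>"
    using summable_on_Sigma_banach[of "\<lambda>x y. psi \<phi> K x y" \<eta> "\<lambda>x. \<eta> - {x}"]
      infsum_Sigma'_banach[of "\<lambda>x y. psi \<phi> K x y" \<eta> "\<lambda>x. \<eta> - {x}"] psi
    by (simp_all add: g_def[abs_def] Vfun_def offdiag_eq_Sigma)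
  have "(\<Sum>\<^sub>\<infinity>x\<in>\<eta>. Wfun h \<phi> K (\<eta> - {x}) - Wfun h \<phi> K \<eta>) = (\<Sum>\<^sub>\<infinity>x\<in>\<eta>. - (h x + g x))"
    by (rule infsum_cong) (rule remove)
  also have "\<dots> = - ((\<Sum>\<^sub>\<infinity>x\<in>\<eta>. h x) + (\<Sum>\<^sub>\<infinity>x\<in>\<eta>. g x))"
    by (simp only: infsum_uminus infsum_add[OF h g])
  finally show ?thesis
    unfolding g_sum .
qed

lemma ennreal_Wfun_insert_diff_le:
  fixes \<eta> :: "'a::euclidean_space set"
  assumes h_nonneg: "\<And>x. 0 \<le> h x" and h: "h summable_on \<eta>"
    and psi: "(\<lambda>(u, v). psi \<phi> K u v) summable_on offdiag \<eta>"
    and psi_nonneg: "\<And>x y. x \<noteq> y \<Longrightarrow> 0 \<le> psi \<phi> K x y"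
  shows "ennreal (Wfun h \<phi> K (insert x \<eta>) - Wfun h \<phi> K \<eta>)
    \<le> ennreal (h x) + (\<integral>\<^sup>+y. ennreal (psi \<phi> K x y) \<partial>count_space \<eta>)"
    (is "_ \<le> _ + ?S")
proof (cases "x \<in> \<eta> \<or> ?S = \<infinity>")
  case True
  then show ?thesis by (elim disjE) (simp_all add: insert_absorb)
next
  case False
  then have x: "x \<notin> \<eta>" and S_finite: "?S < \<infinity>"
    by (simp_all add: less_top[symmetric])
  have nonneg: "0 \<le> psi \<phi> K x y" if "y \<in> \<eta>" for y
    using x that by (intro psi_nonneg) auto
  then have summable: "(\<lambda>y. psi \<phi> K x y) summable_on \<eta>"
    using S_finite by (rule summable_on_if_nn_integral_count_space_finite)
  have "ennreal (Wfun h \<phi> K (insert x \<eta>) - Wfun h \<phi> K \<eta>) = ennreal (h x + (\<Sum>\<^sub>\<infinity>y\<in>\<eta>. psi \<phi> K x y))"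
    using Wfun_insert[OF x h summable_on_offdiag_insert[OF x psi summable]] by simp
  also have "\<dots> = ennreal (h x) + ennreal (\<Sum>\<^sub>\<infinity>y\<in>\<eta>. psi \<phi> K x y)"
    using h_nonneg nonneg by (intro ennreal_plus infsum_nonneg) auto
  also have "ennreal (\<Sum>\<^sub>\<infinity>y\<in>\<eta>. psi \<phi> K x y) = ?S"
    using nonneg summable by (rule nn_integral_count_space_eq_infsum[symmetric])
  finally show ?thesis by (rule eq_refl)
qed

lemma borel_measurable_nn_integral_count_space:
  assumes "countable A" and "\<And>y. y \<in> A \<Longrightarrow> (\<lambda>x. f x y) \<in> borel_measurable M"
  shows "(\<lambda>x. \<integral>\<^sup>+y. f x y \<partial>count_space A) \<in> borel_measurable M"
proof -
  interpret A: sigma_finite_measure "count_space A"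
    by (rule sigma_finite_measure_count_space_countable[OF assms(1)])
  have "(\<lambda>p. f (snd p) (fst p)) \<in> borel_measurable (count_space A \<Otimes>\<^sub>M M)"
    using assms by (intro measurable_pair_measure_countable1) auto
  then have "(\<lambda>(x, y). f x y) \<in> borel_measurable (M \<Otimes>\<^sub>M count_space A)"
    by (subst measurable_pair_swap_iff) (simp add: case_prod_beta)
  then show ?thesis by (rule A.borel_measurable_nn_integral)
qed

lemma nn_integral_psi_le_C1:
  fixes \<phi> :: "'a::euclidean_space \<Rightarrow> real"
  assumes \<phi>: "\<phi> \<in> borel_measurable lborel" "\<And>x. 0 \<le> \<phi> x"
    and K_mono: "\<And>p q. 0 < p \<Longrightarrow> p \<le> q \<Longrightarrow> K q \<le> K p"
  shows "(\<integral>\<^sup>+x. ennreal (psi \<phi> K x y) \<partial>lborel) \<le> C1 \<phi> K * ennreal (\<phi> y)"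
proof -
  have "(\<lambda>x. K (dist y x)) \<in> borel_measurable lborel"
    using borel_measurable_antimono_dist[of K y, OF K_mono] by (simp add: dist_commute)
  then have meas: "(\<lambda>x. ennreal (\<phi> x * K (dist y x))) \<in> borel_measurable lborel"
    using \<phi>(1) by measurable
  have "psi \<phi> K x y = (\<phi> x * K (dist y x)) * \<phi> y" for x
    by (simp add: psi_def dist_commute mult_ac)
  then have "(\<integral>\<^sup>+x. ennreal (psi \<phi> K x y) \<partial>lborel)
      = (\<integral>\<^sup>+x. ennreal (\<phi> x * K (dist y x)) * ennreal (\<phi> y) \<partial>lborel)"
    using \<phi>(2) by (simp add: ennreal_mult'')
  also have "\<dots> = (\<integral>\<^sup>+x. ennreal (\<phi> x * K (dist y x)) \<partial>lborel) * ennreal (\<phi> y)"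
    by (rule nn_integral_multc[OF meas])
  also have "\<dots> \<le> C1 \<phi> K * ennreal (\<phi> y)"
    unfolding C1_def by (intro mult_right_mono SUP_upper) auto
  finally show ?thesis .
qed

lemma nn_integral_psi_count_space_le:
  fixes \<phi> :: "'a::euclidean_space \<Rightarrow> real"
  assumes "countable \<eta>" and \<phi>: "\<phi> \<in> borel_measurable lborel" "\<And>x. 0 \<le> \<phi> x"
    and K_mono: "\<And>p q. 0 < p \<Longrightarrow> p \<le> q \<Longrightarrow> K q \<le> K p"
    and C1_finite: "C1 \<phi> K < \<infinity>" and B: "0 \<le> B"
    and h_lower: "\<And>x. 2 * enn2real (C1 \<phi> K) * B * \<phi> x \<le> h x"
    and h_nonneg: "\<And>x. 0 \<le> h x" and h: "h summable_on \<eta>"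
  shows "ennreal B * (\<integral>\<^sup>+x. (\<integral>\<^sup>+y. ennreal (psi \<phi> K x y) \<partial>count_space \<eta>) \<partial>lborel)
    \<le> ennreal ((\<Sum>\<^sub>\<infinity>y\<in>\<eta>. h y) / 2)"
proof -
  define c where "c = enn2real (C1 \<phi> K)"
  have C1_eq: "C1 \<phi> K = ennreal c" and "0 \<le> c"
    using C1_finite by (simp_all add: c_def)
  have psi_meas: "(\<lambda>x. ennreal (psi \<phi> K x y)) \<in> borel_measurable lborel" for y
    using borel_measurable_psi[OF \<phi>(1) K_mono] by measurable
  have pointwise: "ennreal B * (\<integral>\<^sup>+x. ennreal (psi \<phi> K x y) \<partial>lborel) \<le> ennreal (h y / 2)" for y
  proof -
    have "ennreal B * (\<integral>\<^sup>+x. ennreal (psi \<phi> K x y) \<partial>lborel) \<le> ennreal B * (C1 \<phi> K * ennreal (\<phi> y))"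
      using \<phi> K_mono by (intro mult_left_mono nn_integral_psi_le_C1) auto
    also have "\<dots> = ennreal (B * c * \<phi> y)"
      using B \<open>0 \<le> c\<close> \<phi>(2)[of y] by (simp add: C1_eq ennreal_mult mult.assoc)
    also have "\<dots> \<le> ennreal (h y / 2)"
      using h_lower[of y] by (intro ennreal_leI) (simp add: c_def mult_ac)
    finally show ?thesis .
  qed
  have "ennreal B * (\<integral>\<^sup>+x. (\<integral>\<^sup>+y. ennreal (psi \<phi> K x y) \<partial>count_space \<eta>) \<partial>lborel)
      = (\<integral>\<^sup>+y. ennreal B * (\<integral>\<^sup>+x. ennreal (psi \<phi> K x y) \<partial>lborel) \<partial>count_space \<eta>)"
    using nn_integral_count_space_nn_integral[OF \<open>countable \<eta>\<close> psi_meas]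
    by (simp add: nn_integral_cmult)
  also have "\<dots> \<le> (\<integral>\<^sup>+y. ennreal (h y / 2) \<partial>count_space \<eta>)"
    by (intro nn_integral_mono pointwise)
  also have "\<dots> = ennreal (\<Sum>\<^sub>\<infinity>y\<in>\<eta>. h y / 2)"
    using h_nonneg summable_on_cmult_left[OF h, of "1/2"]
    by (intro nn_integral_count_space_eq_infsum) simp_all
  also have "(\<Sum>\<^sub>\<infinity>y\<in>\<eta>. h y / 2) = (\<Sum>\<^sub>\<infinity>y\<in>\<eta>. h y) / 2"
    using infsum_cmult_left'[of h "1/2" \<eta>] by simp
  finally show ?thesis .
qed

lemma integral_Wfun_insert_le:
  fixes \<eta> :: "'a::euclidean_space set" and b :: "'a \<Rightarrow> real"
  assumes b: "\<And>x. 0 \<le> b x" "\<And>x. b x \<le> B"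
    and "countable \<eta>" and \<phi>: "\<phi> \<in> borel_measurable lborel" "\<And>x. 0 \<le> \<phi> x"
    and K_nonneg: "\<And>q. 0 < q \<Longrightarrow> 0 \<le> K q" and K_mono: "\<And>p q. 0 < p \<Longrightarrow> p \<le> q \<Longrightarrow> K q \<le> K p"
    and C1_finite: "C1 \<phi> K < \<infinity>" and h_lower: "\<And>x. 2 * enn2real (C1 \<phi> K) * B * \<phi> x \<le> h x"
    and h_int: "integrable lborel h" and h_nonneg: "\<And>x. 0 \<le> h x" and h: "h summable_on \<eta>"
    and psi: "(\<lambda>(u, v). psi \<phi> K u v) summable_on offdiag \<eta>"
  shows "(\<integral>x. b x * (Wfun h \<phi> K (insert x \<eta>) - Wfun h \<phi> K \<eta>) \<partial>lborel)
    \<le> B * (\<integral>x. h x \<partial>lborel) + (\<Sum>\<^sub>\<infinity>y\<in>\<eta>. h y) / 2"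
proof -
  define S where "S x = (\<integral>\<^sup>+y. ennreal (psi \<phi> K x y) \<partial>count_space \<eta>)" for x
  have B: "0 \<le> B" using b order_trans by blast
  have psi_nonneg: "x \<noteq> y \<Longrightarrow> 0 \<le> psi \<phi> K x y" for x y
    using \<phi>(2) K_nonneg by (rule psi_nonneg)
  have S_meas: "S \<in> borel_measurable lborel"
    unfolding S_def using \<open>countable \<eta>\<close> borel_measurable_psi[OF \<phi>(1) K_mono]
    by (intro borel_measurable_nn_integral_count_space) auto
  have h_meas: "h \<in> borel_measurable lborel"
    using h_int by (rule borel_measurable_integrable)
  have int_h: "0 \<le> (\<integral>x. h x \<partial>lborel)"
    using h_nonneg by (simp add: integral_nonneg_AE)
  have sum_h: "0 \<le> (\<Sum>\<^sub>\<infinity>y\<in>\<eta>. h y)"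
    using h_nonneg by (rule infsum_nonneg)
  have pointwise: "ennreal (b x * (Wfun h \<phi> K (insert x \<eta>) - Wfun h \<phi> K \<eta>)) \<le> ennreal B * (ennreal (h x) + S x)" for x
  proof -
    have "ennreal (b x * (Wfun h \<phi> K (insert x \<eta>) - Wfun h \<phi> K \<eta>))
        = ennreal (b x) * ennreal (Wfun h \<phi> K (insert x \<eta>) - Wfun h \<phi> K \<eta>)"
      using b(1) by (rule ennreal_mult')
    also have "\<dots> \<le> ennreal B * (ennreal (h x) + S x)"
      unfolding S_def using b(2) h_nonneg h psi psi_nonneg
      by (intro mult_mono ennreal_leI ennreal_Wfun_insert_diff_le) auto
    finally show ?thesis .
  qed
  have "(\<integral>\<^sup>+x. ennreal (b x * (Wfun h \<phi> K (insert x \<eta>) - Wfun h \<phi> K \<eta>)) \<partial>lborel)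
      \<le> (\<integral>\<^sup>+x. ennreal B * (ennreal (h x) + S x) \<partial>lborel)"
    by (intro nn_integral_mono pointwise)
  also have "\<dots> = ennreal B * (\<integral>\<^sup>+x. ennreal (h x) \<partial>lborel) + ennreal B * (\<integral>\<^sup>+x. S x \<partial>lborel)"
    using h_meas S_meas by (simp add: nn_integral_cmult nn_integral_add distrib_left)
  also have "\<dots> \<le> ennreal (B * (\<integral>x. h x \<partial>lborel)) + ennreal ((\<Sum>\<^sub>\<infinity>y\<in>\<eta>. h y) / 2)"
    using nn_integral_psi_count_space_le[OF \<open>countable \<eta>\<close> \<phi> K_mono C1_finite B h_lower h_nonneg h]
      nn_integral_eq_integral[OF h_int] h_nonneg B
    by (intro add_mono) (simp_all add: S_def ennreal_mult)
  also have "\<dots> = ennreal (B * (\<integral>x. h x \<partial>lborel) + (\<Sum>\<^sub>\<infinity>y\<in>\<eta>. h y) / 2)"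
    using B int_h sum_h by (simp add: ennreal_plus)
  finally show ?thesis
    using B int_h sum_h by (intro integral_real_bounded) auto
qed

theorem lemma4p10:
  fixes \<epsilon> :: real
    and b :: "'a::euclidean_space \<Rightarrow> 'a set \<Rightarrow> real"
    and K :: "real \<Rightarrow> real"
    and \<phi> h :: "'a \<Rightarrow> real"
    and \<eta> :: "'a set"
  assumes eps: "\<epsilon> > 0"
    and b_meas: "\<And>\<xi>. \<xi> \<in> GammaG \<epsilon> \<Longrightarrow> (\<lambda>x. b x \<xi>) \<in> borel_measurable lborel"
    and b_nonneg: "\<And>x \<xi>. \<xi> \<in> GammaG \<epsilon> \<Longrightarrow> 0 \<le> b x \<xi>"
    and b_bdd: "bdd_above {b x \<xi> | x \<xi>. \<xi> \<in> GammaG \<epsilon>}"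
    and K_pos: "\<And>q. q > 0 \<Longrightarrow> K q > 0"
    and K_mono: "\<And>p q. 0 < p \<Longrightarrow> p \<le> q \<Longrightarrow> K q \<le> K p"
    and K_lim: "filterlim K at_top (at_right 0)"
    and K_int: "\<And>r. r > 0 \<Longrightarrow> set_integrable lborel {r..} (\<lambda>q. K q * q ^ (DIM('a) - 1))"
    and phi_meas: "\<phi> \<in> borel_measurable lborel"
    and h_meas: "h \<in> borel_measurable lborel"
    and phi_pos: "\<And>x. \<phi> x > 0"
    and h_pos: "\<And>x. h x > 0"
    and phi_sep: "\<And>C. compact C \<Longrightarrow> \<exists>c>0. \<forall>x\<in>C. c \<le> \<phi> x"
    and h_sep: "\<And>C. compact C \<Longrightarrow> \<exists>c>0. \<forall>x\<in>C. c \<le> h x"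
    and C1_fin: "C1 \<phi> K < \<infinity>"
    and h_lower: "\<And>x. 2 * enn2real (C1 \<phi> K) * bsup b \<epsilon> * \<phi> x \<le> h x"
    and h_upper: "\<And>x. h x \<le> Gfun \<epsilon> x"
    and eta: "\<eta> \<in> Theta \<epsilon> \<phi> K"
  shows "Lgen b (Wfun h \<phi> K) \<eta> \<le> bsup b \<epsilon> * (\<integral>x. h x \<partial>lborel) - 1/2 * Wfun h \<phi> K \<eta>"
proof -
  have \<eta>: "\<eta> \<in> GammaG \<epsilon>" and psi: "(\<lambda>(u, v). psi \<phi> K u v) summable_on offdiag \<eta>"
    using eta by (auto simp: Theta_def)
  then have "countable \<eta>" and G: "Gfun \<epsilon> summable_on \<eta>"
    by (auto simp: GammaG_def intro: countable_if_locfin)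
  have h_nonneg: "\<And>x. 0 \<le> h x" and \<phi>_nonneg: "\<And>x. 0 \<le> \<phi> x"
    and K_nonneg: "\<And>q. 0 < q \<Longrightarrow> 0 \<le> K q"
    using h_pos phi_pos K_pos by (auto intro: less_imp_le)
  have h: "h summable_on \<eta>"
    using G h_upper h_nonneg by (rule summable_on_comparison_test)
  have h_int: "integrable lborel h"
    by (rule Bochner_Integration.integrable_bound[OF integrable_Gfun[OF eps] h_meas])
       (use h_upper h_nonneg in \<open>auto simp: Gfun_def\<close>)
  have death: "(\<Sum>\<^sub>\<infinity>x\<in>\<eta>. Wfun h \<phi> K (\<eta> - {x}) - Wfun h \<phi> K \<eta>)
      = - ((\<Sum>\<^sub>\<infinity>x\<in>\<eta>. h x) + 2 * Vfun \<phi> K \<eta>)"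
    using h psi by (rule infsum_Wfun_remove_eq)
  have birth: "(\<integral>x. b x \<eta> * (Wfun h \<phi> K (insert x \<eta>) - Wfun h \<phi> K \<eta>) \<partial>lborel)
      \<le> bsup b \<epsilon> * (\<integral>x. h x \<partial>lborel) + (\<Sum>\<^sub>\<infinity>y\<in>\<eta>. h y) / 2"
    using b_nonneg[OF \<eta>] bsup_upper[OF b_bdd \<eta>] \<open>countable \<eta>\<close> phi_meas \<phi>_nonneg K_nonneg K_mono
      C1_fin h_lower h_int h_nonneg h psi
    by (rule integral_Wfun_insert_le)
  have "0 \<le> Vfun \<phi> K \<eta>"
    using \<phi>_nonneg K_nonneg by (intro Vfun_nonneg psi_nonneg)
  moreover have "Wfun h \<phi> K \<eta> = (\<Sum>\<^sub>\<infinity>x\<in>\<eta>. h x) + Vfun \<phi> K \<eta>"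
    by (simp add: Wfun_def)
  ultimately show ?thesis
    using death birth unfolding Lgen_def by linarith
qed

end
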